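(* Let $r \in \mathbb{Q}_{>1} \setminus \mathbb{N}$ (so $S_r$ is atomic). Let $x \in S_r \setminus \{0\}$ and let $z = \sum_{i=0}^N \alpha_i r^i \in \mathsf{Z}(x)$, where $N \in \mathbb{N}$ and $\alpha_0, \dots, \alpha_N \in \mathbb{N}_0$. Then: (1) $|z| = \min \mathsf{L}(x)$ if and only if $\alpha_i < \mathsf{n}(r)$ for all $i \in \{0, \dots, N\}$; (2) there is exactly one factorization in $\mathsf{Z}(x)$ of minimum length; (3) $|z| = \max \mathsf{L}(x)$ if and only if $\alpha_i < \mathsf{d}(r)$ for all $i \in \{1, \dots, N\}$; (4) there is exactly one factorization in $\mathsf{Z}(x)$ of maximum length; (5) $|\mathsf{Z}(x)| = 1$ if and only if $|\mathsf{L}(x)| = 1$, and in this case $\alpha_0 < \mathsf{n}(r)$ and $\alpha_i < \mathsf{d}(r)$ for all $i \in \{1, \dots, N\}$.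
   Context: For $q \in \mathbb{Q}_{>0}$, $\mathsf{n}(q)$ and $\mathsf{d}(q)$ denote the unique positive integers with $\gcd(\mathsf{n}(q),\mathsf{d}(q))=1$ and $q = \mathsf{n}(q)/\mathsf{d}(q)$. For $r \in \mathbb{Q}_{>0}$, $S_r$ denotes the additive submonoid of $(\mathbb{Q}_{\ge 0},+)$ generated by $\{r^n : n \in \mathbb{N}_0\}$. $S_r$ is atomic exactly when $r=1$ or $\mathsf{n}(r)>1$; if moreover $r \notin \mathbb{N}$, its atoms are exactly the pairwise distinct elements $r^n$, $n \in \mathbb{N}_0$. A factorization of $x \in S_r$ is a formal finite sum $\sum_i \alpha_i r^i$ with $\alpha_i \in \mathbb{N}_0$ whose value in $\mathbb{Q}$ is $x$; $\mathsf{Z}(x)$ is the set of factorizations of $x$, the length of $z=\sum_i \alpha_i r^i$ is $|z| = \sum_i \alpha_i$, and $\mathsf{L}(x) = \{|z| : z \in \mathsf{Z}(x)\}$. Two formal sums differing only by zero coefficients are identified. (For $r>1$, every $\mathsf{L}(x)$ is finite.) *)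

theory Defs
  imports Complex_Main
begin

definition numr :: "rat \<Rightarrow> nat" where
  "numr q = nat (fst (quotient_of q))"
definition denr :: "rat \<Rightarrow> nat" where
  "denr q = nat (snd (quotient_of q))"

text \<open>A factorization is a finitely supported coefficient function alpha : nat \<Rightarrow> nat,
  representing the formal sum of alpha i * r^i (zero coefficients are thus identified).\<close>
definition fsupp :: "(nat \<Rightarrow> nat) \<Rightarrow> nat set" where
  "fsupp a = {i. a i \<noteq> 0}"

definition fval :: "rat \<Rightarrow> (nat \<Rightarrow> nat) \<Rightarrow> rat" where
  "fval r a = (\<Sum>i\<in>fsupp a. of_nat (a i) * r ^ i)"

definition flen :: "(nat \<Rightarrow> nat) \<Rightarrow> nat" where
  "flen a = (\<Sum>i\<in>fsupp a. a i)"

definition Zr :: "rat \<Rightarrow> rat \<Rightarrow> (nat \<Rightarrow> nat) set" where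
  "Zr r x = {a. finite (fsupp a) \<and> fval r a = x}"

definition Lr :: "rat \<Rightarrow> rat \<Rightarrow> nat set" where
  "Lr r x = flen ` Zr r x"

definition Sr :: "rat \<Rightarrow> rat set" where
  "Sr r = {x. Zr r x \<noteq> {}}"

end

theory Submission
  imports Defs
begin

text \<open>Write \<open>r = n/d\<close> in lowest terms. The exchange \<open>n\<cdot>r\<^sup>i = d\<cdot>r\<^sup>i\<^sup>+\<^sup>1\<close> preserves the value of
  a factorization and lowers its length by \<open>n - d > 0\<close>; so a factorization of minimal length has
  all coefficients below \<open>n\<close>, and, exchanging backwards, one of maximal length has all coefficients
  of positive index below \<open>d\<close>. Conversely each of these digit conditions holds for at most one
  factorization of \<open>x\<close>: multiplying \<open>\<Sum> (\<alpha>\<^sub>i - \<beta>\<^sub>i) r\<^sup>i = 0\<close> by \<open>d\<^sup>M\<close> gives \<open>\<Sum> c\<^sub>i n\<^sup>i d\<^sup>M\<^sup>-\<^sup>i = 0\<close>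
  with \<open>c\<^sub>i = \<alpha>\<^sub>i - \<beta>\<^sub>i\<close>, so by coprimality \<open>n\<close> divides \<open>c\<^sub>0\<close> and \<open>d\<close> divides \<open>c\<^sub>M\<close>; the digit bound
  makes that coefficient vanish, and one peels off the lowest, respectively highest, coefficient.
  If all factorizations have the same length, all of them have minimal length, so there is only one.\<close>

lemma int_dvd_abs_less_imp_zero:
  fixes m c :: int
  assumes "m dvd c" "\<bar>c\<bar> < m"
  shows "c = 0"
proof (rule ccontr)
  assume "c \<noteq> 0"
  then have "\<bar>m\<bar> \<le> \<bar>c\<bar>" using assms(1) by (rule dvd_imp_le_int)
  with assms(2) show False by simp
qed

lemma digits_zero_if_abs_less_num:
  fixes n d :: int and c :: "nat \<Rightarrow> int"
  assumes "coprime n d" "\<forall>k. \<bar>c k\<bar> < n" "(\<Sum>k\<le>M. c k * n ^ k * d ^ (M - k)) = 0"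
  shows "\<forall>k\<le>M. c k = 0"
  using assms(2,3)
proof (induction M arbitrary: c)
  case 0
  then show ?case by simp
next
  case (Suc M)
  define S where "S = (\<Sum>k\<le>M. c (Suc k) * n ^ k * d ^ (M - k))"
  have "(\<Sum>k\<le>Suc M. c k * n ^ k * d ^ (Suc M - k)) = c 0 * d ^ Suc M + n * S"
    unfolding S_def by (subst sum.atMost_Suc_shift) (simp add: sum_distrib_left algebra_simps)
  with Suc.prems(2) have eq: "c 0 * d ^ Suc M + n * S = 0" by simp
  then have "n dvd c 0 * d ^ Suc M"
    by (metis add.commute add_eq_0_iff dvd_minus_iff dvd_triv_left)
  moreover have "coprime n (d ^ Suc M)" using assms(1) by simp
  ultimately have "n dvd c 0" using coprime_dvd_mult_left_iff by blast
  then have c0: "c 0 = 0" using Suc.prems(1) int_dvd_abs_less_imp_zero by blast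
  have "n > 0" using Suc.prems(1) abs_ge_zero[of "c 0"] by (meson le_less_trans)
  with eq c0 have "S = 0" by simp
  then have "\<forall>k\<le>M. c (Suc k) = 0"
    using Suc.IH[of "\<lambda>k. c (Suc k)"] Suc.prems(1) unfolding S_def by blast
  with c0 show ?case by (metis Suc_le_mono not0_implies_Suc)
qed

lemma digits_zero_if_abs_less_den:
  fixes n d :: int and c :: "nat \<Rightarrow> int"
  assumes "coprime n d" "\<forall>k>0. \<bar>c k\<bar> < d" "(\<Sum>k\<le>M. c k * n ^ k * d ^ (M - k)) = 0"
  shows "\<forall>k\<le>M. c k = 0"
  using assms(3)
proof (induction M)
  case 0
  then show ?case by simp
next
  case (Suc M)
  define S where "S = (\<Sum>k\<le>M. c k * n ^ k * d ^ (M - k))"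
  have "(\<Sum>k\<le>Suc M. c k * n ^ k * d ^ (Suc M - k)) = d * S + c (Suc M) * n ^ Suc M"
    unfolding S_def by (simp add: sum_distrib_left Suc_diff_le algebra_simps)
  with Suc.prems have eq: "d * S + c (Suc M) * n ^ Suc M = 0" by simp
  then have "d dvd c (Suc M) * n ^ Suc M"
    by (metis add_eq_0_iff dvd_minus_iff dvd_triv_left)
  moreover have "coprime d (n ^ Suc M)" using assms(1) by (simp add: coprime_commute)
  ultimately have "d dvd c (Suc M)" using coprime_dvd_mult_left_iff by blast
  then have cM: "c (Suc M) = 0" using assms(2) int_dvd_abs_less_imp_zero by blast
  have "d > 0" using assms(2) abs_ge_zero[of "c (Suc M)"] by (meson le_less_trans zero_less_Suc)
  with eq cM have "S = 0" by simp
  with Suc.IH cM show ?case unfolding S_def by (metis le_Suc_eq)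
qed

lemma
  assumes "r > 0"
  shows rat_eq_numr_div_denr: "r = of_nat (numr r) / of_nat (denr r)"
    and coprime_numr_denr: "coprime (numr r) (denr r)"
    and denr_pos: "denr r > 0"
    and numr_pos: "numr r > 0"
proof -
  obtain p q where pq: "quotient_of r = (p, q)" by fastforce
  have r: "r = of_int p / of_int q" and q: "q > 0" and cop: "coprime p q"
    using quotient_of_div[OF pq] quotient_of_denom_pos[OF pq] quotient_of_coprime[OF pq] .
  have p: "p > 0" using assms r q by (simp add: zero_less_divide_iff)
  have nd: "numr r = nat p" "denr r = nat q" using pq by (simp_all add: numr_def denr_def)
  show "r = of_nat (numr r) / of_nat (denr r)" "denr r > 0" "numr r > 0"
    using r p q nd by simp_all
  show "coprime (numr r) (denr r)"
    using cop p q nd by (simp add: coprime_int_iff[symmetric])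
qed

lemma denr_mult_eq_numr:
  assumes "r > 0"
  shows "of_nat (denr r) * r = of_nat (numr r)"
proof -
  have "of_nat (denr r) * (of_nat (numr r) / of_nat (denr r)) = (of_nat (numr r) :: rat)"
    using denr_pos[OF assms] by simp
  then show ?thesis using rat_eq_numr_div_denr[OF assms] by metis
qed

lemma denr_less_numr:
  assumes "r > 1"
  shows "denr r < numr r"
proof -
  have "denr r > 0" using assms by (simp add: denr_pos)
  then have "of_nat (denr r) < of_nat (denr r) * r" using assms by simp
  also have "\<dots> = of_nat (numr r)" using assms by (simp add: denr_mult_eq_numr)
  finally show ?thesis by simp
qed

lemma finite_fsupp_iff: "finite (fsupp a) \<longleftrightarrow> (\<exists>M. \<forall>k>M. a k = 0)"
proof
  assume "finite (fsupp a)"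
  then obtain M where "\<forall>k\<in>fsupp a. k \<le> M" by (auto simp: finite_nat_set_iff_bounded_le)
  then have "\<forall>k>M. a k = 0" unfolding fsupp_def by (auto dest: leD)
  then show "\<exists>M. \<forall>k>M. a k = 0" ..
next
  assume "\<exists>M. \<forall>k>M. a k = 0"
  then obtain M where "\<forall>k>M. a k = 0" by blast
  then have "fsupp a \<subseteq> {..M}" unfolding fsupp_def by (auto intro: leI)
  then show "finite (fsupp a)" using finite_subset by blast
qed

lemma fval_eq_sum_atMost: "\<forall>k>M. a k = 0 \<Longrightarrow> fval r a = (\<Sum>k\<le>M. of_nat (a k) * r ^ k)"
  unfolding fval_def by (rule sum.mono_neutral_left) (auto simp: fsupp_def intro: leI)

lemma flen_eq_sum_atMost: "\<forall>k>M. a k = 0 \<Longrightarrow> flen a = (\<Sum>k\<le>M. a k)"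
  unfolding flen_def by (rule sum.mono_neutral_left) (auto simp: fsupp_def intro: leI)

lemma of_nat_flen_le_fval:
  assumes "finite (fsupp a)" "r \<ge> 1"
  shows "of_nat (flen a) \<le> fval r a"
proof -
  obtain M where M: "\<forall>k>M. a k = 0" using assms(1) finite_fsupp_iff by blast
  have "of_nat (flen a) = (\<Sum>k\<le>M. (of_nat (a k) :: rat))" by (simp add: flen_eq_sum_atMost[OF M])
  also have "\<dots> \<le> (\<Sum>k\<le>M. of_nat (a k) * r ^ k)"
    using assms(2) by (intro sum_mono) (simp add: mult_le_cancel_left1)
  also have "\<dots> = fval r a" by (simp add: fval_eq_sum_atMost[OF M])
  finally show ?thesis .
qed

lemma finite_Lr: "r \<ge> 1 \<Longrightarrow> finite (Lr r x)"
proof (rule finite_subset)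
  assume "r \<ge> 1"
  then show "Lr r x \<subseteq> {..nat \<lfloor>x\<rfloor>}"
    unfolding Lr_def Zr_def using of_nat_flen_le_fval by (force simp: le_nat_iff le_floor_iff)
qed simp

lemma Zr_integer_relation:
  assumes "r > 0" "a \<in> Zr r x" "b \<in> Zr r x"
  obtains M where "\<forall>k>M. a k = 0 \<and> b k = 0"
    and "(\<Sum>k\<le>M. (int (a k) - int (b k)) * int (numr r) ^ k * int (denr r) ^ (M - k)) = 0"
proof -
  define n d where "n = numr r" and "d = denr r"
  have r: "r = of_nat n / of_nat d" and d: "d > 0"
    using assms(1) by (simp_all add: n_def d_def rat_eq_numr_div_denr denr_pos)
  obtain Ma Mb where "\<forall>k>Ma. a k = 0" "\<forall>k>Mb. b k = 0"
    using assms(2,3) unfolding Zr_def by (auto simp: finite_fsupp_iff)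
  define M where "M = max Ma Mb"
  have M: "\<forall>k>M. a k = 0 \<and> b k = 0" using \<open>\<forall>k>Ma. a k = 0\<close> \<open>\<forall>k>Mb. b k = 0\<close> by (simp add: M_def)
  have scale: "of_nat d ^ M * r ^ k = of_nat (n ^ k * d ^ (M - k))" if "k \<le> M" for k
  proof -
    have "(of_nat d :: rat) ^ M = of_nat d ^ k * of_nat d ^ (M - k)"
      using that by (simp flip: power_add)
    then show ?thesis using d by (simp add: r power_divide)
  qed
  have "fval r a = fval r b" using assms(2,3) by (simp add: Zr_def)
  moreover have "fval r a = (\<Sum>k\<le>M. of_nat (a k) * r ^ k)" "fval r b = (\<Sum>k\<le>M. of_nat (b k) * r ^ k)"
    using M by (simp_all add: fval_eq_sum_atMost)
  ultimately have "(\<Sum>k\<le>M. of_nat (a k) * r ^ k) = (\<Sum>k\<le>M. of_nat (b k) * r ^ k)" by simp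
  then have "(\<Sum>k\<le>M. (of_nat (a k) - of_nat (b k)) * r ^ k) = 0"
    by (simp add: sum_subtractf left_diff_distrib)
  then have "of_nat d ^ M * (\<Sum>k\<le>M. (of_nat (a k) - of_nat (b k)) * r ^ k) = 0" by simp
  then have "(\<Sum>k\<le>M. (of_nat (a k) - of_nat (b k)) * (of_nat d ^ M * r ^ k)) = 0"
    by (simp add: sum_distrib_left mult_ac)
  then have "of_int (\<Sum>k\<le>M. (int (a k) - int (b k)) * int n ^ k * int d ^ (M - k)) = (0 :: rat)"
    by (simp add: scale mult.assoc)
  then have "(\<Sum>k\<le>M. (int (a k) - int (b k)) * int n ^ k * int d ^ (M - k)) = 0"
    by (simp only: of_int_eq_0_iff)
  then show thesis using that M by (simp add: n_def d_def)
qed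

lemma Zr_unique_if_lt_numr:
  assumes "r > 0" "a \<in> Zr r x" "b \<in> Zr r x" "\<forall>k. a k < numr r" "\<forall>k. b k < numr r"
  shows "a = b"
proof
  fix k
  obtain M where M: "\<forall>k>M. a k = 0 \<and> b k = 0"
    and rel: "(\<Sum>k\<le>M. (int (a k) - int (b k)) * int (numr r) ^ k * int (denr r) ^ (M - k)) = 0"
    using Zr_integer_relation[OF assms(1-3)] by blast
  have "\<bar>int (a k) - int (b k)\<bar> < int (numr r)" for k
    using assms(4,5)[rule_format, of k] by linarith
  from digits_zero_if_abs_less_num[OF _ _ rel] this have "\<forall>k\<le>M. a k = b k"
    using coprime_numr_denr[OF assms(1)] by simp
  with M show "a k = b k" by (metis not_le)
qed

lemma Zr_unique_if_lt_denr:
  assumes "r > 0" "a \<in> Zr r x" "b \<in> Zr r x" "\<forall>k>0. a k < denr r" "\<forall>k>0. b k < denr r"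
  shows "a = b"
proof
  fix k
  obtain M where M: "\<forall>k>M. a k = 0 \<and> b k = 0"
    and rel: "(\<Sum>k\<le>M. (int (a k) - int (b k)) * int (numr r) ^ k * int (denr r) ^ (M - k)) = 0"
    using Zr_integer_relation[OF assms(1-3)] by blast
  have "k > 0 \<Longrightarrow> \<bar>int (a k) - int (b k)\<bar> < int (denr r)" for k
    using assms(4,5)[rule_format, of k] by linarith
  from digits_zero_if_abs_less_den[OF _ _ rel] this have "\<forall>k\<le>M. a k = b k"
    using coprime_numr_denr[OF assms(1)] by simp
  with M show "a k = b k" by (metis not_le)
qed

lemma Zr_exchange:
  assumes a: "a \<in> Zr r x" and "p \<le> a i" "i \<noteq> j"
    and pq: "of_nat p * r ^ i = of_nat q * r ^ j"
  defines "a' \<equiv> a(i := a i - p, j := a j + q)"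
  shows "a' \<in> Zr r x" and "flen a' + p = flen a + q"
proof -
  obtain M0 where "\<forall>k>M0. a k = 0" using a by (auto simp: Zr_def finite_fsupp_iff)
  define M where "M = max M0 (max i j)"
  have M: "\<forall>k>M. a k = 0" "\<forall>k>M. a' k = 0" and ij: "i \<le> M" "j \<le> M"
    using \<open>\<forall>k>M0. a k = 0\<close> by (auto simp: M_def a'_def)
  have val: "of_nat (a' k) * r ^ k + (if k = i then of_nat p * r ^ i else 0)
      = of_nat (a k) * r ^ k + (if k = j then of_nat q * r ^ j else 0)" for k
    using assms(2,3) by (auto simp: a'_def of_nat_diff algebra_simps)
  have len: "a' k + (if k = i then p else 0) = a k + (if k = j then q else 0)" for k
    using assms(2,3) by (auto simp: a'_def)
  have "fval r a' + of_nat p * r ^ i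
      = (\<Sum>k\<le>M. of_nat (a' k) * r ^ k + (if k = i then of_nat p * r ^ i else 0))"
    using ij by (simp add: fval_eq_sum_atMost[OF M(2)] sum.distrib)
  also have "\<dots> = (\<Sum>k\<le>M. of_nat (a k) * r ^ k + (if k = j then of_nat q * r ^ j else 0))"
    unfolding val ..
  also have "\<dots> = fval r a + of_nat q * r ^ j"
    using ij by (simp add: fval_eq_sum_atMost[OF M(1)] sum.distrib)
  finally have "fval r a' = x" using a pq by (simp add: Zr_def)
  then show "a' \<in> Zr r x" using M(2) by (auto simp: Zr_def finite_fsupp_iff)
  have "flen a' + p = (\<Sum>k\<le>M. a' k + (if k = i then p else 0))"
    using ij by (simp add: flen_eq_sum_atMost[OF M(2)] sum.distrib)
  also have "\<dots> = (\<Sum>k\<le>M. a k + (if k = j then q else 0))"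
    unfolding len ..
  also have "\<dots> = flen a + q"
    using ij by (simp add: flen_eq_sum_atMost[OF M(1)] sum.distrib)
  finally show "flen a' + p = flen a + q" .
qed

lemma Zr_min_length_imp_lt_numr:
  assumes "r > 1" "a \<in> Zr r x" "flen a = Min (Lr r x)"
  shows "a k < numr r"
proof (rule ccontr)
  assume "\<not> a k < numr r"
  then have "numr r \<le> a k" by simp
  moreover have "of_nat (numr r) * r ^ k = of_nat (denr r) * r ^ Suc k"
    using denr_mult_eq_numr[of r] assms(1) by (simp add: mult.assoc)
  ultimately obtain a' where "a' \<in> Zr r x" "flen a' + numr r = flen a + denr r"
    using Zr_exchange[OF assms(2)] by (metis n_not_Suc_n)
  moreover have "Min (Lr r x) \<le> flen a'"
    using Min_le[OF finite_Lr, of r "flen a'" x] \<open>a' \<in> Zr r x\<close> assms(1) by (simp add: Lr_def)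
  ultimately show False using assms denr_less_numr[of r] by simp
qed

lemma Zr_max_length_imp_lt_denr:
  assumes "r > 1" "a \<in> Zr r x" "flen a = Max (Lr r x)" "k > 0"
  shows "a k < denr r"
proof (rule ccontr)
  assume "\<not> a k < denr r"
  then have "denr r \<le> a k" by simp
  moreover have "of_nat (denr r) * r ^ k = of_nat (numr r) * r ^ (k - 1)"
    using denr_mult_eq_numr[of r] assms(1,4) power_minus_mult[of k r]
    by (metis mult.assoc mult.commute zero_less_one order.strict_trans)
  moreover have "k \<noteq> k - 1" using assms(4) by simp
  ultimately obtain a' where "a' \<in> Zr r x" "flen a' + denr r = flen a + numr r"
    using Zr_exchange[OF assms(2)] by metis
  moreover have "flen a' \<le> Max (Lr r x)"
    using Max_ge[OF finite_Lr, of r "flen a'" x] \<open>a' \<in> Zr r x\<close> assms(1) by (simp add: Lr_def)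
  ultimately show False using assms denr_less_numr[of r] by simp
qed

lemma Zr_min_length_exists:
  assumes "r \<ge> 1" "x \<in> Sr r"
  obtains \<beta> where "\<beta> \<in> Zr r x" "flen \<beta> = Min (Lr r x)"
  using Min_in[OF finite_Lr[OF assms(1)]] assms(2) by (force simp: Lr_def Sr_def)

lemma Zr_max_length_exists:
  assumes "r \<ge> 1" "x \<in> Sr r"
  obtains \<beta> where "\<beta> \<in> Zr r x" "flen \<beta> = Max (Lr r x)"
  using Max_in[OF finite_Lr[OF assms(1)]] assms(2) by (force simp: Lr_def Sr_def)

lemma Zr_min_length_iff:
  assumes "r > 1" "x \<in> Sr r" "a \<in> Zr r x"
  shows "flen a = Min (Lr r x) \<longleftrightarrow> (\<forall>k. a k < numr r)"
proof
  assume "\<forall>k. a k < numr r"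
  obtain \<beta> where "\<beta> \<in> Zr r x" "flen \<beta> = Min (Lr r x)"
    using Zr_min_length_exists assms(1,2) by (metis less_imp_le)
  with \<open>\<forall>k. a k < numr r\<close> show "flen a = Min (Lr r x)"
    using Zr_unique_if_lt_numr[of r a x \<beta>] Zr_min_length_imp_lt_numr assms by auto
qed (use Zr_min_length_imp_lt_numr assms in blast)

lemma Zr_max_length_iff:
  assumes "r > 1" "x \<in> Sr r" "a \<in> Zr r x"
  shows "flen a = Max (Lr r x) \<longleftrightarrow> (\<forall>k>0. a k < denr r)"
proof
  assume "\<forall>k>0. a k < denr r"
  obtain \<beta> where "\<beta> \<in> Zr r x" "flen \<beta> = Max (Lr r x)"
    using Zr_max_length_exists assms(1,2) by (metis less_imp_le)
  with \<open>\<forall>k>0. a k < denr r\<close> show "flen a = Max (Lr r x)"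
    using Zr_unique_if_lt_denr[of r a x \<beta>] Zr_max_length_imp_lt_denr assms by auto
qed (use Zr_max_length_imp_lt_denr assms in blast)

lemma ex1_Zr_min_length:
  assumes "r > 1" "x \<in> Sr r"
  shows "\<exists>!\<beta>. \<beta> \<in> Zr r x \<and> flen \<beta> = Min (Lr r x)"
proof -
  have "r > 0" using assms(1) by simp
  obtain \<beta> where "\<beta> \<in> Zr r x" "flen \<beta> = Min (Lr r x)"
    using Zr_min_length_exists assms by (metis less_imp_le)
  then show ?thesis
    using Zr_min_length_iff[OF assms] Zr_unique_if_lt_numr[OF \<open>r > 0\<close>] by blast
qed

lemma ex1_Zr_max_length:
  assumes "r > 1" "x \<in> Sr r"
  shows "\<exists>!\<beta>. \<beta> \<in> Zr r x \<and> flen \<beta> = Max (Lr r x)"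
proof -
  have "r > 0" using assms(1) by simp
  obtain \<beta> where "\<beta> \<in> Zr r x" "flen \<beta> = Max (Lr r x)"
    using Zr_max_length_exists assms by (metis less_imp_le)
  then show ?thesis
    using Zr_max_length_iff[OF assms] Zr_unique_if_lt_denr[OF \<open>r > 0\<close>] by blast
qed

lemma card_Zr_eq_1_iff_card_Lr_eq_1:
  assumes "r > 1" "x \<in> Sr r"
  shows "card (Zr r x) = 1 \<longleftrightarrow> card (Lr r x) = 1"
proof
  assume "card (Zr r x) = 1"
  then show "card (Lr r x) = 1" by (auto simp: Lr_def card_1_singleton_iff)
next
  assume "card (Lr r x) = 1"
  then obtain m where "flen ` Zr r x = {m}" by (auto simp: Lr_def card_1_singleton_iff)
  then have "\<forall>a\<in>Zr r x. flen a = Min (Lr r x)" by (auto simp: Lr_def)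
  with ex1_Zr_min_length[OF assms] have "\<exists>\<beta>. Zr r x = {\<beta>}" by blast
  then show "card (Zr r x) = 1" by auto
qed

theorem lemma3p2:
  fixes r x :: rat and N :: nat and \<alpha> :: "nat \<Rightarrow> nat"
  assumes "r > 1" and "r \<notin> \<nat>"
    and "x \<in> Sr r" and "x \<noteq> 0"
    and "\<forall>i>N. \<alpha> i = 0"
    and "\<alpha> \<in> Zr r x"
  shows "(flen \<alpha> = Min (Lr r x) \<longleftrightarrow> (\<forall>i\<le>N. \<alpha> i < numr r))
    \<and> (\<exists>!\<beta>. \<beta> \<in> Zr r x \<and> flen \<beta> = Min (Lr r x))
    \<and> (flen \<alpha> = Max (Lr r x) \<longleftrightarrow> (\<forall>i\<in>{1..N}. \<alpha> i < denr r))
    \<and> (\<exists>!\<beta>. \<beta> \<in> Zr r x \<and> flen \<beta> = Max (Lr r x))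
    \<and> (card (Zr r x) = 1 \<longleftrightarrow> card (Lr r x) = 1)
    \<and> (card (Zr r x) = 1 \<longrightarrow> \<alpha> 0 < numr r \<and> (\<forall>i\<in>{1..N}. \<alpha> i < denr r))"
proof -
  have "numr r > 0" "denr r > 0" using assms(1) by (simp_all add: numr_pos denr_pos)
  have num: "(\<forall>i\<le>N. \<alpha> i < numr r) \<longleftrightarrow> (\<forall>k. \<alpha> k < numr r)"
    using assms(5) \<open>numr r > 0\<close> by (metis not_le)
  have den: "(\<forall>i\<in>{1..N}. \<alpha> i < denr r) \<longleftrightarrow> (\<forall>k>0. \<alpha> k < denr r)"
    using assms(5) \<open>denr r > 0\<close> by (auto simp: Suc_le_eq)
  have "flen \<alpha> = Min (Lr r x) \<and> flen \<alpha> = Max (Lr r x)" if "card (Zr r x) = 1"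
    using that assms(6) by (auto simp: Lr_def card_1_singleton_iff)
  then show ?thesis
    using Zr_min_length_iff[OF assms(1,3,6)] Zr_max_length_iff[OF assms(1,3,6)] num den
      ex1_Zr_min_length[OF assms(1,3)] ex1_Zr_max_length[OF assms(1,3)]
      card_Zr_eq_1_iff_card_Lr_eq_1[OF assms(1,3)]
    by blast
qed

end
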